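(* The relation $\mathrm{Step}^{(p)}$ (par-steps of the algorithm BFS) is well-founded: there is no infinite sequence of configurations $\gamma_0,\gamma_1,\dots$ with $\gamma_i\xrightarrow{\mathrm{Step}^{(p)}}\gamma_{i+1}$ for all $i$.
   Context: Let $G$ be a finite, connected, undirected graph with node set $V$ and a distinguished node $r$ (the root). Each node $p$ has a fixed ordered list $N(p)$ of its neighbours. A configuration $\gamma$ assigns to each node $p$ a value $\gamma.p.d\in\mathbb N$ and a neighbour $\gamma.p.par\in N(p)$. For a non-root node $p$ let $Dist_p(\gamma)=\min\{\gamma.q.d+1 : q\in N(p)\}$. Algorithm BFS (Dolev et al.) has the following actions. Root: enabled iff $\gamma.r.d\neq 0$; executing it sets $r.d:=0$. Non-root $p$, action CD: enabled iff $\gamma.p.d\ne Dist_p(\gamma)$; executing sets $p.d:=Dist_p(\gamma)$. Non-root $p$, action CP: enabled iff $\gamma.p.d=Dist_p(\gamma)$ and $\gamma.q_0.d+1\neq\gamma.p.d$ where $q_0=\gamma.p.par$; executing sets $p.par$ to the first $q$ in the list $N(p)$ with $\gamma.q.d+1=\gamma.p.d$. A node is enabled if one of its actions is enabled (at most one is). A step $\gamma\to\gamma'$ (relation $\mathrm{Step}$, unfair daemon) holds iff there is a nonempty set $S$ of nodes enabled in $\gamma$ such that $\gamma'$ is obtained by every $p\in S$ simultaneously executing its enabled action (guards and right-hand sides evaluated in $\gamma$), all other nodes keeping their values. $\mathrm{Step}^{(p)}$ is the set of steps $\gamma\to\gamma'$ with $\gamma'.p.d=\gamma.p.d$ for all nodes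 $p$. A relation is well-founded if it admits no infinite forward chain $x_0 R x_1 R x_2\cdots$. *)

theory Defs
  imports Main
begin

text \<open>Graph given by node set V, root r and ordered neighbour lists N.
  A configuration is a pair (d, par) of the distance and parent variables.\<close>

type_synonym 'v config = "('v \<Rightarrow> nat) \<times> ('v \<Rightarrow> 'v)"

definition graph_edges :: "('v \<Rightarrow> 'v list) \<Rightarrow> ('v \<times> 'v) set" where
  "graph_edges N = {(p, q). q \<in> set (N p)}"

definition rooted_graph :: "'v set \<Rightarrow> ('v \<Rightarrow> 'v list) \<Rightarrow> 'v \<Rightarrow> bool" where
  "rooted_graph V N r \<longleftrightarrow>
     finite V \<and> r \<in> V \<and>
     (\<forall>p\<in>V. set (N p) \<subseteq> V \<and> distinct (N p) \<and> p \<notin> set (N p)) \<and>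
     (\<forall>p\<in>V. \<forall>q\<in>V. q \<in> set (N p) \<longleftrightarrow> p \<in> set (N q)) \<and>
     (\<forall>p\<in>V. (r, p) \<in> (graph_edges N)\<^sup>*)"

definition is_config :: "'v set \<Rightarrow> ('v \<Rightarrow> 'v list) \<Rightarrow> 'v config \<Rightarrow> bool" where
  "is_config V N \<gamma> \<longleftrightarrow> (\<forall>p\<in>V. snd \<gamma> p \<in> set (N p))"

definition Dist :: "('v \<Rightarrow> 'v list) \<Rightarrow> ('v \<Rightarrow> nat) \<Rightarrow> 'v \<Rightarrow> nat" where
  "Dist N d p = Min ((\<lambda>q. d q + 1) ` set (N p))"

definition CD_enabled :: "('v \<Rightarrow> 'v list) \<Rightarrow> 'v config \<Rightarrow> 'v \<Rightarrow> bool" where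
  "CD_enabled N \<gamma> p \<longleftrightarrow> fst \<gamma> p \<noteq> Dist N (fst \<gamma>) p"

definition CP_enabled :: "('v \<Rightarrow> 'v list) \<Rightarrow> 'v config \<Rightarrow> 'v \<Rightarrow> bool" where
  "CP_enabled N \<gamma> p \<longleftrightarrow> fst \<gamma> p = Dist N (fst \<gamma>) p \<and>
      fst \<gamma> (snd \<gamma> p) + 1 \<noteq> fst \<gamma> p"

definition enabled :: "'v set \<Rightarrow> ('v \<Rightarrow> 'v list) \<Rightarrow> 'v \<Rightarrow> 'v config \<Rightarrow> 'v \<Rightarrow> bool" where
  "enabled V N r \<gamma> p \<longleftrightarrow> p \<in> V \<and>
     (if p = r then fst \<gamma> r \<noteq> 0 else CD_enabled N \<gamma> p \<or> CP_enabled N \<gamma> p)"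

definition new_d :: "('v \<Rightarrow> 'v list) \<Rightarrow> 'v \<Rightarrow> 'v config \<Rightarrow> 'v \<Rightarrow> nat" where
  "new_d N r \<gamma> p = (if p = r then 0
      else if CD_enabled N \<gamma> p then Dist N (fst \<gamma>) p else fst \<gamma> p)"

definition new_par :: "('v \<Rightarrow> 'v list) \<Rightarrow> 'v \<Rightarrow> 'v config \<Rightarrow> 'v \<Rightarrow> 'v" where
  "new_par N r \<gamma> p = (if p \<noteq> r \<and> CP_enabled N \<gamma> p
      then hd (filter (\<lambda>q. fst \<gamma> q + 1 = fst \<gamma> p) (N p)) else snd \<gamma> p)"

definition Step :: "'v set \<Rightarrow> ('v \<Rightarrow> 'v list) \<Rightarrow> 'v \<Rightarrow> 'v config \<Rightarrow> 'v config \<Rightarrow> bool" where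
  "Step V N r \<gamma> \<gamma>' \<longleftrightarrow> is_config V N \<gamma> \<and> is_config V N \<gamma>' \<and>
     (\<exists>S. S \<noteq> {} \<and> (\<forall>p\<in>S. enabled V N r \<gamma> p) \<and>
        (\<forall>p. fst \<gamma>' p = (if p \<in> S then new_d N r \<gamma> p else fst \<gamma> p)) \<and>
        (\<forall>p. snd \<gamma>' p = (if p \<in> S then new_par N r \<gamma> p else snd \<gamma> p)))"

definition Step_par :: "'v set \<Rightarrow> ('v \<Rightarrow> 'v list) \<Rightarrow> 'v \<Rightarrow> 'v config \<Rightarrow> 'v config \<Rightarrow> bool" where
  "Step_par V N r \<gamma> \<gamma>' \<longleftrightarrow> Step V N r \<gamma> \<gamma>' \<and> (\<forall>p\<in>V. fst \<gamma>' p = fst \<gamma> p)"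

end

theory Submission
  imports Defs
begin

text \<open>A step that leaves every d-value unchanged can only execute CP actions, and each of them
  repairs the parent pointer of its node while no other pointer moves. So the finite set of nodes
  whose parent pointer is wrong strictly shrinks along such steps.\<close>

definition wrong_parents :: "'v set \<Rightarrow> 'v \<Rightarrow> 'v config \<Rightarrow> 'v set" where
  "wrong_parents V r \<gamma> = {p \<in> V. p \<noteq> r \<and> fst \<gamma> (snd \<gamma> p) + 1 \<noteq> fst \<gamma> p}"

lemma Dist_attained:
  assumes "N p \<noteq> []"
  obtains q where "q \<in> set (N p)" and "d q + 1 = Dist N d p"
proof -
  have "Dist N d p \<in> (\<lambda>q. d q + 1) ` set (N p)"
    unfolding Dist_def using assms by (intro Min_in) auto
  then show thesis
    using that by force
qed

lemma new_par_correct: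
  assumes "p \<noteq> r" and "CP_enabled N \<gamma> p" and "N p \<noteq> []"
  shows "fst \<gamma> (new_par N r \<gamma> p) + 1 = fst \<gamma> p"
proof -
  define P where "P q \<longleftrightarrow> fst \<gamma> q + 1 = fst \<gamma> p" for q
  obtain q where "q \<in> set (N p)" and "P q"
    using Dist_attained[of N p "fst \<gamma>"] assms(2,3)
    unfolding CP_enabled_def P_def by metis
  then have "filter P (N p) \<noteq> []"
    by (auto simp: filter_empty_conv)
  then have "P (hd (filter P (N p)))"
    using hd_in_set by fastforce
  then show ?thesis
    using assms(1,2) unfolding new_par_def P_def by simp
qed

lemma Step_parE:
  assumes "Step_par V N r \<gamma> \<gamma>'"
  obtains S where "S \<noteq> {}" and "S \<subseteq> V - {r}"
    and "\<And>p. p \<in> S \<Longrightarrow> CP_enabled N \<gamma> p"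
    and "fst \<gamma>' = fst \<gamma>"
    and "\<And>p. snd \<gamma>' p = (if p \<in> S then new_par N r \<gamma> p else snd \<gamma> p)"
    and "is_config V N \<gamma>'"
proof -
  obtain S where S: "S \<noteq> {}" "\<forall>p\<in>S. enabled V N r \<gamma> p"
      "\<forall>p. fst \<gamma>' p = (if p \<in> S then new_d N r \<gamma> p else fst \<gamma> p)"
      "\<forall>p. snd \<gamma>' p = (if p \<in> S then new_par N r \<gamma> p else snd \<gamma> p)"
    and conf: "is_config V N \<gamma>'" and d_fixed: "\<forall>p\<in>V. fst \<gamma>' p = fst \<gamma> p"
    using assms unfolding Step_par_def Step_def by blast
  have "S \<subseteq> V"
    using S(2) unfolding enabled_def by blast
  have d_eq: "fst \<gamma>' = fst \<gamma>"
  proof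
    fix p
    show "fst \<gamma>' p = fst \<gamma> p"
      using S(3) d_fixed \<open>S \<subseteq> V\<close> by (cases "p \<in> S") (metis subsetD, simp)
  qed
  have executes_CP: "p \<noteq> r \<and> CP_enabled N \<gamma> p" if "p \<in> S" for p
  proof -
    have "new_d N r \<gamma> p = fst \<gamma> p"
      using S(3) d_eq that by metis
    then show ?thesis
      using S(2) that unfolding enabled_def new_d_def CD_enabled_def
      by (auto split: if_splits)
  qed
  show thesis
  proof (rule that)
    show "S \<subseteq> V - {r}"
      using \<open>S \<subseteq> V\<close> executes_CP by blast
  qed (use S d_eq conf executes_CP in auto)
qed

lemma Step_par_wrong_parents_psubset:
  assumes "Step_par V N r \<gamma> \<gamma>'"
  shows "wrong_parents V r \<gamma>' \<subset> wrong_parents V r \<gamma>"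
proof -
  obtain S where S: "S \<noteq> {}" "S \<subseteq> V - {r}" "\<And>p. p \<in> S \<Longrightarrow> CP_enabled N \<gamma> p"
    and d_eq: "fst \<gamma>' = fst \<gamma>"
    and par: "\<And>p. snd \<gamma>' p = (if p \<in> S then new_par N r \<gamma> p else snd \<gamma> p)"
    and conf: "is_config V N \<gamma>'"
    using assms by (rule Step_parE) iprover
  have repaired: "p \<in> wrong_parents V r \<gamma> - wrong_parents V r \<gamma>'" if "p \<in> S" for p
  proof -
    have "p \<in> V" and "p \<noteq> r" and cp: "CP_enabled N \<gamma> p"
      using S that by auto
    moreover have "N p \<noteq> []"
      using conf \<open>p \<in> V\<close> unfolding is_config_def by fastforce
    ultimately have "fst \<gamma>' (snd \<gamma>' p) + 1 = fst \<gamma>' p"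
      using new_par_correct par[of p] d_eq that by simp
    with \<open>p \<in> V\<close> \<open>p \<noteq> r\<close> cp show ?thesis
      unfolding wrong_parents_def CP_enabled_def by simp
  qed
  have "p \<in> wrong_parents V r \<gamma>' \<longleftrightarrow> p \<in> wrong_parents V r \<gamma>" if "p \<notin> S" for p
    using that d_eq par unfolding wrong_parents_def by auto
  with repaired S(1) show ?thesis
    by blast
qed

lemma wf_Step_par:
  assumes "finite V"
  shows "wf {(\<gamma>', \<gamma>). Step_par V N r \<gamma> \<gamma>'}"
proof (rule wf_subset)
  show "wf (inv_image finite_psubset (wrong_parents V r))"
    by (rule wf_inv_image[OF wf_finite_psubset])
  show "{(\<gamma>', \<gamma>). Step_par V N r \<gamma> \<gamma>'} \<subseteq> inv_image finite_psubset (wrong_parents V r)"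
  proof clarify
    fix \<gamma> \<gamma>'
    assume "Step_par V N r \<gamma> \<gamma>'"
    then have "wrong_parents V r \<gamma>' \<subset> wrong_parents V r \<gamma>"
      by (rule Step_par_wrong_parents_psubset)
    moreover have "finite (wrong_parents V r \<gamma>)"
      using assms unfolding wrong_parents_def by simp
    ultimately show "(\<gamma>', \<gamma>) \<in> inv_image finite_psubset (wrong_parents V r)"
      by (simp add: finite_psubset_def)
  qed
qed

theorem lemma1:
  assumes "rooted_graph V N r"
  shows "\<not> (\<exists>\<gamma> :: nat \<Rightarrow> 'v config. \<forall>i. Step_par V N r (\<gamma> i) (\<gamma> (Suc i)))"
proof -
  have "finite V"
    using assms unfolding rooted_graph_def by blast
  then show ?thesis
    using wf_Step_par[of V N r] unfolding wf_iff_no_infinite_down_chain by blast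
qed

end
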